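(* For every $N\in\mathbb{N}$, every $f\in\mathcal{E}_N$, every $0<\delta\le1$ and every $\beta\in\mathbb{N}^n$, $$\|\partial_x^\beta f\|_{L^2(\mathbb{R}^n)}\le e^{\frac{e}{2\delta^2}}(2\delta)^{|\beta|}|\beta|!\,e^{\delta^{-1}\sqrt{N}}\|f\|_{L^2(\mathbb{R}^n)}.$$
   Context: The one-dimensional Hermite functions are $\phi_k(x)=\frac{(-1)^k}{\sqrt{2^k k!\sqrt{\pi}}}e^{x^2/2}\frac{d^k}{dx^k}(e^{-x^2})$, $k\in\mathbb{N}$. For $\alpha\in\mathbb{N}^n$, $\Phi_\alpha(x)=\prod_{j=1}^n\phi_{\alpha_j}(x_j)$ and $|\alpha|=\alpha_1+\dots+\alpha_n$. $\mathcal{E}_N=\mathrm{Span}_{\mathbb{C}}\{\Phi_\alpha:|\alpha|\le N\}$; $\partial_x^\beta=\partial_{x_1}^{\beta_1}\cdots\partial_{x_n}^{\beta_n}$. *)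

theory Defs
  imports "HOL-Analysis.Analysis"
begin

definition hermite_fun :: "nat \<Rightarrow> real \<Rightarrow> real" where
  "hermite_fun k x = (-1) ^ k / sqrt (2 ^ k * fact k * sqrt pi) * exp (x\<^sup>2 / 2)
      * (deriv ^^ k) (\<lambda>t. exp (- (t\<^sup>2))) x"

definition hermite_multi :: "('n::finite \<Rightarrow> nat) \<Rightarrow> real ^ 'n \<Rightarrow> real" where
  "hermite_multi \<alpha> x = (\<Prod>j\<in>UNIV. hermite_fun (\<alpha> j) (x $ j))"

definition mlen :: "('n::finite \<Rightarrow> nat) \<Rightarrow> nat" where
  "mlen \<alpha> = (\<Sum>j\<in>UNIV. \<alpha> j)"

definition hermite_space :: "nat \<Rightarrow> (real ^ 'n::finite \<Rightarrow> complex) set" where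
  "hermite_space N = {f. \<exists>c :: ('n \<Rightarrow> nat) \<Rightarrow> complex.
      f = (\<lambda>x. \<Sum>\<alpha>\<in>{\<alpha>. mlen \<alpha> \<le> N}. c \<alpha> * complex_of_real (hermite_multi \<alpha> x))}"

definition partial :: "'n::finite \<Rightarrow> (real ^ 'n \<Rightarrow> complex) \<Rightarrow> real ^ 'n \<Rightarrow> complex" where
  "partial i f x = vector_derivative (\<lambda>t. f (x + t *\<^sub>R axis i 1)) (at 0)"

text \<open>The multi-derivative partial^beta, applying partial_i beta_i times for each coordinate i,
  coordinates processed in a fixed enumeration order (irrelevant for smooth functions).\<close>
definition coord_list :: "'n::finite list" where
  "coord_list = (SOME xs. distinct xs \<and> set xs = UNIV)"

definition multi_partial :: "('n::finite \<Rightarrow> nat) \<Rightarrow> (real ^ 'n \<Rightarrow> complex) \<Rightarrow> real ^ 'n \<Rightarrow> complex" where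
  "multi_partial \<beta> f = foldr (\<lambda>i g. (partial i ^^ \<beta> i) g) coord_list f"

definition L2_norm :: "(real ^ 'n::finite \<Rightarrow> complex) \<Rightarrow> real" where
  "L2_norm f = sqrt (LINT x|lborel. (cmod (f x))\<^sup>2)"

end

theory Submission
  imports Defs "HOL-Probability.Distributions" "HOL-Computational_Algebra.Polynomial"
begin

text \<open>
  On \<open>\<E>\<^sub>N\<close> the functions \<open>\<Phi>\<^sub>\<alpha>\<close> are orthonormal, and
  \<open>\<partial>\<^sub>i \<Phi>\<^sub>\<alpha> = sqrt (\<alpha>\<^sub>i / 2) \<Phi>\<^bsub>\<alpha> - e\<^sub>i\<^esub> - sqrt ((\<alpha>\<^sub>i + 1) / 2) \<Phi>\<^bsub>\<alpha> + e\<^sub>i\<^esub>\<close>.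
  So \<open>\<partial>\<^sub>i\<close> maps \<open>\<E>\<^sub>M\<close> into \<open>\<E>\<^bsub>M+1\<^esub>\<close>, and Parseval bounds its norm there by
  \<open>sqrt (2 (M + 1))\<close>. Hence \<open>\<partial>\<^sup>\<beta>\<close> on \<open>\<E>\<^sub>N\<close> has norm at most
  \<open>\<Prod>k<|\<beta>|. sqrt (2 (N + k + 1))\<close>. Writing each factor as at most
  \<open>2\<delta>(k+1) \<cdot> max 1 (\<surd>N / (\<delta>(k+1))) \<cdot> sqrt (max 1 (\<delta>\<^sup>-\<^sup>2 / (k+1)))\<close> and using
  \<open>\<Prod>k<m. max 1 (x / (k+1)) \<le> e\<^sup>x\<close> gives the bound
  \<open>e\<^bsup>1/(2\<delta>\<^sup>2)\<^esup> (2\<delta>)\<^bsup>|\<beta>|\<^esup> |\<beta>|! e\<^bsup>\<surd>N/\<delta>\<^esup>\<close>, valid for every \<open>\<delta> > 0\<close>.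

  Orthonormality of the one-dimensional \<open>\<phi>\<^sub>k = c\<^sub>k H\<^sub>k(x) e\<^bsup>-x\<^sup>2/2\<^esup>\<close> comes from a single
  integration by parts: \<open>\<integral> (p' - 2 x p) e\<^bsup>-x\<^sup>2\<^esup> = 0\<close> for every polynomial \<open>p\<close>, checked on
  monomials via the Gaussian moments.
\<close>

section \<open>Integrals of products over coordinates\<close>

lemma has_bochner_integral_prod_Basis:
  fixes f :: "'a::euclidean_space \<Rightarrow> real \<Rightarrow> real"
  assumes int: "\<And>b. b \<in> Basis \<Longrightarrow> integrable lborel (f b)"
  shows "has_bochner_integral lborel (\<lambda>x::'a. \<Prod>b\<in>Basis. f b (x \<bullet> b))
           (\<Prod>b\<in>Basis. integral\<^sup>L lborel (f b))"
proof -
  interpret product_sigma_finite "\<lambda>_. lborel :: real measure" by standard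
  have [measurable]: "\<And>b. b \<in> Basis \<Longrightarrow> f b \<in> borel_measurable borel"
    using int by (simp add: borel_measurable_integrable)
  have coords: "(\<Prod>b\<in>Basis. f b ((\<Sum>b'\<in>Basis. \<omega> b' *\<^sub>R b') \<bullet> b)) = (\<Prod>b\<in>Basis. f b (\<omega> b))" for \<omega>
    by (intro prod.cong refl) (simp add: inner_sum_left inner_Basis if_distrib sum.delta cong: if_cong)
  have meas: "(\<lambda>x::'a. \<Prod>b\<in>Basis. f b (x \<bullet> b)) \<in> borel_measurable borel"
    by measurable
  have T: "(\<lambda>\<omega>. \<Sum>b\<in>Basis. \<omega> b *\<^sub>R b) \<in> measurable (\<Pi>\<^sub>M b\<in>Basis. lborel) (borel :: 'a measure)"
    by measurable
  have "integrable (\<Pi>\<^sub>M b\<in>Basis. lborel) (\<lambda>\<omega>. \<Prod>b\<in>Basis. f b (\<omega> b))"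
    by (rule product_integrable_prod) (auto intro: int)
  then have "integrable lborel (\<lambda>x::'a. \<Prod>b\<in>Basis. f b (x \<bullet> b))"
    by (subst lborel_eq, subst integrable_distr_eq[OF T meas]) (simp add: coords)
  moreover have "integral\<^sup>L lborel (\<lambda>x::'a. \<Prod>b\<in>Basis. f b (x \<bullet> b)) = (\<Prod>b\<in>Basis. integral\<^sup>L lborel (f b))"
    by (subst lborel_eq, subst integral_distr[OF T meas])
      (simp add: coords product_integral_prod int)
  ultimately show ?thesis
    by (simp add: has_bochner_integral_iff)
qed

lemma has_bochner_integral_prod_vec:
  fixes g :: "'n::finite \<Rightarrow> real \<Rightarrow> real"
  assumes "\<And>j. integrable lborel (g j)"
  shows "has_bochner_integral lborel (\<lambda>x::real^'n. \<Prod>j\<in>UNIV. g j (x $ j))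
           (\<Prod>j\<in>UNIV. integral\<^sup>L lborel (g j))"
proof -
  define f where "f b = g (SOME j. b = axis j (1::real))" for b :: "real^'n"
  have inj: "inj (\<lambda>j::'n. axis j (1::real))"
    by (auto simp: inj_def axis_eq_axis)
  have f_axis: "f (axis j 1) = g j" for j
    unfolding f_def by (rule arg_cong[where f = g], rule some_equality) (auto simp: axis_eq_axis)
  have Basis: "(Basis :: (real^'n) set) = range (\<lambda>j. axis j 1)"
    unfolding Basis_vec_def by auto
  have prod_Basis: "(\<Prod>b\<in>Basis. h b) = (\<Prod>j\<in>UNIV. h (axis j (1::real)))" for h :: "real^'n \<Rightarrow> real"
    unfolding Basis by (subst prod.reindex[OF inj]) simp
  have "\<And>b. b \<in> (Basis :: (real^'n) set) \<Longrightarrow> integrable lborel (f b)"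
    unfolding Basis using assms f_axis by auto
  from has_bochner_integral_prod_Basis[of f, OF this] show ?thesis
    unfolding prod_Basis by (simp add: f_axis inner_axis)
qed

section \<open>Gaussian integrals of polynomials\<close>

definition gauss_moment :: "nat \<Rightarrow> real" where
  "gauss_moment m = (LINT x|lborel. exp (- x\<^sup>2) * x ^ m)"

lemma has_bochner_integral_gauss_moment_even:
  "has_bochner_integral lborel (\<lambda>x::real. exp (- x\<^sup>2) * x ^ (2 * k))
     (sqrt pi * (fact (2 * k) / (2 ^ (2 * k) * fact k)))"
  using has_bochner_integral_even_function[OF gaussian_moment_even_pos[of k]] by simp

lemma has_bochner_integral_gauss_moment_odd: "has_bochner_integral lborel (\<lambda>x::real. exp (- x\<^sup>2) * x ^ (2 * k + 1)) 0"
  using gaussian_moment_odd_pos by (rule has_bochner_integral_odd_function) simp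

lemma integrable_gauss_moment: "integrable lborel (\<lambda>x::real. exp (- x\<^sup>2) * x ^ m)"
  by (cases "even m") (auto elim!: evenE oddE intro: integrable.intros has_bochner_integral_gauss_moment_even has_bochner_integral_gauss_moment_odd)

lemma gauss_moment_0: "gauss_moment 0 = sqrt pi"
  unfolding gauss_moment_def using has_bochner_integral_gauss_moment_even[of 0] by (simp add: has_bochner_integral_integral_eq)

lemma gauss_moment_1: "gauss_moment 1 = 0"
  unfolding gauss_moment_def using has_bochner_integral_gauss_moment_odd[of 0] by (simp add: has_bochner_integral_integral_eq)

lemma gauss_moment_Suc_Suc: "2 * gauss_moment (Suc (Suc m)) = (m + 1) * gauss_moment m"
proof (cases "even m")
  case True
  then obtain k where m: "m = 2 * k" by blast
  have "fact (2 * Suc k) / (2 ^ (2 * Suc k) * fact (Suc k))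
          = (2 * real k + 1) / 2 * (fact (2 * k) / (2 ^ (2 * k) * (fact k :: real)))"
  proof -
    have "fact (2 * Suc k) = 2 * (real k + 1) * ((2 * real k + 1) * fact (2 * k))"
      by (simp add: algebra_simps)
    moreover have "(2::real) ^ (2 * Suc k) * fact (Suc k) = 2 * (real k + 1) * (2 * (2 ^ (2 * k) * fact k))"
      by (simp add: algebra_simps)
    ultimately show ?thesis
      by (simp only: mult_divide_mult_cancel_left_if) simp
  qed
  moreover have "Suc (Suc m) = 2 * Suc k" using m by simp
  ultimately show ?thesis
    using has_bochner_integral_gauss_moment_even[of k] has_bochner_integral_gauss_moment_even[of "Suc k"]
    by (simp add: gauss_moment_def m has_bochner_integral_integral_eq)
next
  case False
  then obtain k where m: "m = 2 * k + 1" by (blast elim: oddE)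
  have "Suc (Suc m) = 2 * Suc k + 1" using m by simp
  then show ?thesis
    using has_bochner_integral_gauss_moment_odd[of k] has_bochner_integral_gauss_moment_odd[of "Suc k"]
    by (simp add: gauss_moment_def m has_bochner_integral_integral_eq)
qed

definition gauss_integral :: "real poly \<Rightarrow> real" where
  "gauss_integral p = (LINT x|lborel. poly p x * exp (- x\<^sup>2))"

lemma integrable_poly_gauss: "integrable lborel (\<lambda>x. poly (p :: real poly) x * exp (- x\<^sup>2))"
proof -
  have "(\<lambda>x. poly p x * exp (- x\<^sup>2)) = (\<lambda>x. \<Sum>i\<le>degree p. coeff p i * (exp (- x\<^sup>2) * x ^ i))"
    by (simp add: poly_altdef sum_distrib_left sum_distrib_right mult_ac)
  moreover have "integrable lborel (\<lambda>x. \<Sum>i\<le>degree p. coeff p i * (exp (- x\<^sup>2) * x ^ i))"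
    by (intro Bochner_Integration.integrable_sum Bochner_Integration.integrable_mult_right)
      (rule integrable_gauss_moment)
  ultimately show ?thesis
    by simp
qed

lemma gauss_integral_add: "gauss_integral (p + q) = gauss_integral p + gauss_integral q"
  unfolding gauss_integral_def by (simp add: distrib_right integrable_poly_gauss)

lemma gauss_integral_diff: "gauss_integral (p - q) = gauss_integral p - gauss_integral q"
  unfolding gauss_integral_def by (simp add: left_diff_distrib integrable_poly_gauss)

lemma gauss_integral_smult: "gauss_integral (smult c p) = c * gauss_integral p"
  unfolding gauss_integral_def by (simp add: mult.assoc)

lemma gauss_integral_monom: "gauss_integral (monom c m) = c * gauss_moment m"
  unfolding gauss_integral_def gauss_moment_def by (simp add: poly_monom mult_ac)

text \<open>\<open>(poly p x * exp (- x\<^sup>2))' = poly (gauss_deriv p) x * exp (- x\<^sup>2)\<close>: being a total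
  derivative of a rapidly decaying function, \<open>gauss_deriv p\<close> has Gaussian integral zero.\<close>

definition gauss_deriv :: "real poly \<Rightarrow> real poly" where
  "gauss_deriv p = pderiv p - [:0, 2:] * p"

lemma gauss_deriv_add: "gauss_deriv (p + q) = gauss_deriv p + gauss_deriv q"
  unfolding gauss_deriv_def by (simp add: pderiv_add smult_add_right algebra_simps)

lemma gauss_integral_gauss_deriv_monom: "gauss_integral (gauss_deriv (monom c m)) = 0"
proof -
  have "gauss_deriv (monom c m) = monom (of_nat m * c) (m - 1) - monom (2 * c) (m + 1)"
    by (simp add: gauss_deriv_def pderiv_monom mult_monom flip: monom_Suc monom_0)
  then have "gauss_integral (gauss_deriv (monom c m)) = of_nat m * c * gauss_moment (m - 1) - 2 * c * gauss_moment (m + 1)"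
    by (simp add: gauss_integral_diff gauss_integral_monom)
  also have "\<dots> = 0"
    using gauss_moment_1 gauss_moment_Suc_Suc[of "m - 1"] by (cases m) (simp_all add: algebra_simps)
  finally show ?thesis .
qed

lemma gauss_integral_gauss_deriv: "gauss_integral (gauss_deriv p) = 0"
proof -
  have "gauss_integral (gauss_deriv (\<Sum>i\<in>A. monom (coeff p i) i)) = 0" if "finite A" for A
    using that
  proof induct
    case (insert a A)
    then show ?case
      by (simp add: gauss_deriv_add gauss_integral_add gauss_integral_gauss_deriv_monom)
  qed (simp add: gauss_deriv_def gauss_integral_def)
  from this[of "{..degree p}"] show ?thesis
    by (simp add: poly_as_sum_of_monoms)
qed

section \<open>Hermite functions in one variable\<close>

fun hermite_poly :: "nat \<Rightarrow> real poly" where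
  "hermite_poly 0 = 1"
| "hermite_poly (Suc k) = [:0, 2:] * hermite_poly k - pderiv (hermite_poly k)"

declare hermite_poly.simps(2)[simp del]

lemma pderiv_hermite_poly_Suc: "pderiv (hermite_poly (Suc k)) = smult (2 * (real k + 1)) (hermite_poly k)"
proof (induction k)
  case 0
  then show ?case
    by (simp add: pderiv_pCons hermite_poly.simps)
next
  case (Suc k)
  let ?H = "hermite_poly (Suc k)"
  have "pderiv (hermite_poly (Suc (Suc k))) = smult 2 ?H + [:0, 2:] * pderiv ?H - pderiv (pderiv ?H)"
    by (subst hermite_poly.simps(2)[of "Suc k"]) (simp add: pderiv_mult pderiv_diff pderiv_pCons pderiv_smult)
  also have "\<dots> = smult 2 ?H + smult (2 * (real k + 1)) ([:0, 2:] * hermite_poly k - pderiv (hermite_poly k))"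
    using Suc.IH by (simp add: pderiv_smult algebra_simps smult_diff_right)
  also have "\<dots> = smult (2 * (real (Suc k) + 1)) ?H"
  proof -
    have "[:0, 2:] * hermite_poly k - pderiv (hermite_poly k) = ?H"
      by (simp add: hermite_poly.simps)
    then show ?thesis
      by (simp only: smult_add_left[symmetric]) (simp add: algebra_simps)
  qed
  finally show ?case .
qed

lemma deriv_funpow_gaussian:
  "(deriv ^^ k) (\<lambda>t. exp (- (t\<^sup>2))) = (\<lambda>x::real. (-1) ^ k * poly (hermite_poly k) x * exp (- (x\<^sup>2)))"
proof (induction k)
  case (Suc k)
  have "((\<lambda>x::real. (-1) ^ k * poly (hermite_poly k) x * exp (- (x\<^sup>2))) has_real_derivative
          (-1) ^ Suc k * poly (hermite_poly (Suc k)) x * exp (- (x\<^sup>2))) (at x)" for x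
    by (rule derivative_eq_intros refl poly_DERIV | simp)+
      (simp add: hermite_poly.simps(2)[of k] algebra_simps)
  then show ?case
    unfolding funpow.simps o_apply Suc.IH by (intro ext DERIV_imp_deriv)
qed simp

definition hermite_const :: "nat \<Rightarrow> real" where
  "hermite_const k = 1 / sqrt (2 ^ k * fact k * sqrt pi)"

definition hermite_fun_poly :: "nat \<Rightarrow> real poly" where
  "hermite_fun_poly k = smult (hermite_const k) (hermite_poly k)"

lemma hermite_fun_eq: "hermite_fun k x = poly (hermite_fun_poly k) x * exp (- (x\<^sup>2) / 2)"
proof -
  have "exp (x\<^sup>2 / 2) * exp (- (x\<^sup>2)) = exp (- (x\<^sup>2) / 2)"
    by (simp add: exp_add[symmetric])
  moreover have "((-1::real) ^ k * (-1) ^ k) = 1"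
    by (simp add: power_mult_distrib[symmetric])
  ultimately show ?thesis
    unfolding hermite_fun_def deriv_funpow_gaussian hermite_fun_poly_def hermite_const_def
    by (simp add: mult_ac)
qed

lemma hermite_const_Suc: "hermite_const (Suc k) * sqrt (2 * (real k + 1)) = hermite_const k"
proof -
  have "sqrt (2 ^ Suc k * fact (Suc k) * sqrt pi) = sqrt (2 * (real k + 1)) * sqrt (2 ^ k * fact k * sqrt pi)"
    by (simp add: real_sqrt_mult[symmetric] algebra_simps)
  then show ?thesis
    unfolding hermite_const_def by (simp add: field_simps)
qed

lemma hermite_fun_poly_Suc:
  "smult (sqrt (2 * (real k + 1))) (hermite_fun_poly (Suc k))
     = [:0, 2:] * hermite_fun_poly k - pderiv (hermite_fun_poly k)"
proof -
  have "smult (sqrt (2 * (real k + 1))) (hermite_fun_poly (Suc k)) = smult (hermite_const k) (hermite_poly (Suc k))"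
    unfolding hermite_fun_poly_def using hermite_const_Suc[of k] by (simp add: mult_ac)
  then show ?thesis
    by (simp add: hermite_fun_poly_def pderiv_smult smult_diff_right hermite_poly.simps(2)[of k])
qed

lemma pderiv_hermite_fun_poly:
  "pderiv (hermite_fun_poly k) = smult (sqrt (2 * real k)) (hermite_fun_poly (k - 1))"
proof (cases k)
  case (Suc j)
  have "hermite_const (Suc j) * (2 * (real j + 1))
          = hermite_const (Suc j) * sqrt (2 * (real j + 1)) * sqrt (2 * (real j + 1))"
    by (simp add: mult.assoc)
  also have "\<dots> = sqrt (2 * real k) * hermite_const j"
    by (simp only: hermite_const_Suc) (simp add: Suc algebra_simps)
  finally have "hermite_const (Suc j) * (2 * (real j + 1)) = sqrt (2 * real k) * hermite_const j" .
  then show ?thesis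
    by (simp add: Suc hermite_fun_poly_def pderiv_smult pderiv_hermite_poly_Suc)
qed (simp add: hermite_fun_poly_def pderiv_smult)

text \<open>Moving the creation operator \<open>2x - d/dx\<close> across the Gaussian integral turns it into the
  annihilation operator \<open>d/dx\<close>; this is the one integration by parts behind orthonormality.\<close>

lemma gauss_integral_hermite_fun_poly_shift:
  "sqrt (2 * (real k + 1)) * gauss_integral (hermite_fun_poly j * hermite_fun_poly (Suc k))
     = sqrt (2 * real j) * gauss_integral (hermite_fun_poly (j - 1) * hermite_fun_poly k)"
proof -
  let ?P = hermite_fun_poly
  have "sqrt (2 * (real k + 1)) * gauss_integral (?P j * ?P (Suc k))
          = gauss_integral (?P j * smult (sqrt (2 * (real k + 1))) (?P (Suc k)))"
    by (simp add: gauss_integral_smult)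
  also have "\<dots> = gauss_integral (?P j * ([:0, 2:] * ?P k - pderiv (?P k)))"
    by (simp only: hermite_fun_poly_Suc)
  also have "?P j * ([:0, 2:] * ?P k - pderiv (?P k)) = pderiv (?P j) * ?P k - gauss_deriv (?P j * ?P k)"
    unfolding gauss_deriv_def by (simp add: pderiv_mult algebra_simps)
  also have "gauss_integral \<dots> = gauss_integral (pderiv (?P j) * ?P k)"
    by (simp add: gauss_integral_diff gauss_integral_gauss_deriv)
  also have "\<dots> = sqrt (2 * real j) * gauss_integral (?P (j - 1) * ?P k)"
    by (simp add: pderiv_hermite_fun_poly gauss_integral_smult)
  finally show ?thesis .
qed

lemma gauss_integral_hermite_fun_poly:
  "gauss_integral (hermite_fun_poly j * hermite_fun_poly k) = (if j = k then 1 else 0)"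
proof (induction k arbitrary: j)
  case 0
  show ?case
  proof (cases j)
    case 0
    have "hermite_fun_poly 0 * hermite_fun_poly 0 = monom (hermite_const 0 * hermite_const 0) 0"
      by (simp add: hermite_fun_poly_def monom_0)
    then show ?thesis
      using 0 by (simp add: gauss_integral_monom gauss_moment_0 hermite_const_def)
  next
    case (Suc j')
    then show ?thesis
      using gauss_integral_hermite_fun_poly_shift[of j' 0] by (simp add: mult.commute)
  qed
next
  case (Suc k)
  have pos: "sqrt (2 * (real k + 1)) > 0"
    by simp
  show ?case
  proof (cases j)
    case 0
    then show ?thesis
      using gauss_integral_hermite_fun_poly_shift[of k 0] pos by simp
  next
    case (Suc j')
    have "sqrt (2 * (real k + 1)) * gauss_integral (hermite_fun_poly j * hermite_fun_poly (Suc k))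
            = sqrt (2 * real (Suc j')) * (if j' = k then 1 else 0)"
      using gauss_integral_hermite_fun_poly_shift[of k j] Suc.IH[of j'] Suc by simp
    then show ?thesis
      using Suc pos by (auto simp: add.commute)
  qed
qed

lemma hermite_fun_orthonormal:
  "has_bochner_integral lborel (\<lambda>x. hermite_fun j x * hermite_fun k x) (if j = k then 1 else 0)"
proof -
  have "(\<lambda>x. hermite_fun j x * hermite_fun k x)
          = (\<lambda>x. poly (hermite_fun_poly j * hermite_fun_poly k) x * exp (- (x\<^sup>2)))"
  proof
    fix x :: real
    have "exp (- (x\<^sup>2) / 2) * exp (- (x\<^sup>2) / 2) = exp (- (x\<^sup>2))"
      by (simp add: exp_add[symmetric])
    then show "hermite_fun j x * hermite_fun k x = poly (hermite_fun_poly j * hermite_fun_poly k) x * exp (- (x\<^sup>2))"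
      unfolding hermite_fun_eq by (simp add: mult_ac)
  qed
  then show ?thesis
    using integrable_poly_gauss[of "hermite_fun_poly j * hermite_fun_poly k"] gauss_integral_hermite_fun_poly[of j k]
    unfolding has_bochner_integral_iff gauss_integral_def by simp
qed

lemma hermite_fun_has_derivative:
  "(hermite_fun k has_real_derivative
     sqrt (2 * real k) / 2 * hermite_fun (k - 1) x - sqrt (2 * (real k + 1)) / 2 * hermite_fun (Suc k) x) (at x)"
proof -
  let ?P = hermite_fun_poly
  have "sqrt (2 * (real k + 1)) * poly (?P (Suc k)) x = 2 * x * poly (?P k) x - poly (pderiv (?P k)) x"
    using arg_cong[OF hermite_fun_poly_Suc[of k], of "\<lambda>p. poly p x"] by simp
  then have derivative_coeff: "poly (pderiv (?P k)) x - x * poly (?P k) x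
      = sqrt (2 * real k) / 2 * poly (?P (k - 1)) x - sqrt (2 * (real k + 1)) / 2 * poly (?P (Suc k)) x"
    by (simp add: pderiv_hermite_fun_poly field_simps)
  have "((\<lambda>x. poly (?P k) x * exp (- (x\<^sup>2) / 2)) has_real_derivative
          (poly (pderiv (?P k)) x - x * poly (?P k) x) * exp (- (x\<^sup>2) / 2)) (at x)"
    by (rule derivative_eq_intros refl poly_DERIV | simp)+ (simp add: algebra_simps)
  then show ?thesis
    unfolding derivative_coeff hermite_fun_eq[abs_def] by (simp add: algebra_simps)
qed

section \<open>The spaces \<open>\<E>\<^sub>N\<close>\<close>

lemma hermite_multi_orthonormal:
  "has_bochner_integral lborel (\<lambda>x::real^'n::finite. hermite_multi \<alpha> x * hermite_multi \<gamma> x)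
     (if \<alpha> = \<gamma> then 1 else 0)"
proof -
  let ?g = "\<lambda>j t. hermite_fun (\<alpha> j) t * hermite_fun (\<gamma> j) t"
  have "has_bochner_integral lborel (\<lambda>x::real^'n. \<Prod>j\<in>UNIV. ?g j (x $ j))
          (\<Prod>j\<in>UNIV. integral\<^sup>L lborel (?g j))"
    using has_bochner_integral_prod_vec[of ?g] integrable.intros[OF hermite_fun_orthonormal]
    by blast
  moreover have "(\<Prod>j\<in>UNIV. integral\<^sup>L lborel (?g j)) = (\<Prod>j\<in>UNIV. if \<alpha> j = \<gamma> j then 1 else 0)"
    by (intro prod.cong refl has_bochner_integral_integral_eq hermite_fun_orthonormal)
  moreover have "(\<Prod>j\<in>UNIV. if \<alpha> j = \<gamma> j then 1 else 0 :: real) = (if \<alpha> = \<gamma> then 1 else 0)"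
  proof (cases "\<alpha> = \<gamma>")
    case False
    then obtain j where "\<alpha> j \<noteq> \<gamma> j"
      by auto
    then show ?thesis
      using False by (intro trans[OF prod_zero]) auto
  qed simp
  ultimately show ?thesis
    by (simp add: hermite_multi_def prod.distrib)
qed

lemma cmod_sum_of_real_square:
  fixes w :: "'s \<Rightarrow> complex" and h :: "'s \<Rightarrow> real"
  shows "(cmod (\<Sum>s\<in>S. w s * of_real (h s)))\<^sup>2 = (\<Sum>s\<in>S. \<Sum>t\<in>S. Re (w s * cnj (w t)) * (h s * h t))"
proof -
  have "complex_of_real ((cmod (\<Sum>s\<in>S. w s * of_real (h s)))\<^sup>2)
          = (\<Sum>s\<in>S. w s * of_real (h s)) * cnj (\<Sum>s\<in>S. w s * of_real (h s))"
    by (rule complex_norm_square)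
  also have "\<dots> = (\<Sum>s\<in>S. \<Sum>t\<in>S. (w s * cnj (w t)) * of_real (h s * h t))"
    by (simp add: cnj_sum sum_product mult_ac)
  finally have "complex_of_real ((cmod (\<Sum>s\<in>S. w s * of_real (h s)))\<^sup>2)
          = (\<Sum>s\<in>S. \<Sum>t\<in>S. (w s * cnj (w t)) * of_real (h s * h t))" .
  from arg_cong[OF this, of Re] show ?thesis
    by simp
qed

definition hermite_comb :: "'s set \<Rightarrow> ('s \<Rightarrow> complex) \<Rightarrow> ('s \<Rightarrow> ('n::finite \<Rightarrow> nat)) \<Rightarrow> real^'n \<Rightarrow> complex"
  where "hermite_comb S w \<sigma> x = (\<Sum>s\<in>S. w s * of_real (hermite_multi (\<sigma> s) x))"

lemma has_bochner_integral_square_hermite_comb: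
  assumes "finite S" and inj: "inj_on \<sigma> {s\<in>S. w s \<noteq> 0}"
  shows "has_bochner_integral lborel (\<lambda>x. (cmod (hermite_comb S w \<sigma> x))\<^sup>2) (\<Sum>s\<in>S. (cmod (w s))\<^sup>2)"
proof -
  have diagonal: "(\<Sum>t\<in>S. Re (w s * cnj (w t)) * (if \<sigma> s = \<sigma> t then 1 else 0)) = (cmod (w s))\<^sup>2"
    if "s \<in> S" for s
  proof -
    have "(\<Sum>t\<in>S. Re (w s * cnj (w t)) * (if \<sigma> s = \<sigma> t then 1 else 0))
            = (\<Sum>t\<in>{s}. Re (w s * cnj (w t)) * (if \<sigma> s = \<sigma> t then 1 else 0))"
      using \<open>finite S\<close> \<open>s \<in> S\<close> inj by (intro sum.mono_neutral_right) (auto dest: inj_onD)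
    then show ?thesis
      by (simp add: complex_mult_cnj cmod_power2)
  qed
  have "has_bochner_integral lborel
          (\<lambda>x. \<Sum>s\<in>S. \<Sum>t\<in>S. Re (w s * cnj (w t)) * (hermite_multi (\<sigma> s) x * hermite_multi (\<sigma> t) x))
          (\<Sum>s\<in>S. \<Sum>t\<in>S. Re (w s * cnj (w t)) * (if \<sigma> s = \<sigma> t then 1 else 0))"
    by (intro has_bochner_integral_sum has_bochner_integral_mult_right hermite_multi_orthonormal)
  moreover have "(\<Sum>s\<in>S. \<Sum>t\<in>S. Re (w s * cnj (w t)) * (if \<sigma> s = \<sigma> t then 1 else 0))
                   = (\<Sum>s\<in>S. (cmod (w s))\<^sup>2)"
    using diagonal by (rule sum.cong[OF refl])
  ultimately show ?thesis
    unfolding hermite_comb_def cmod_sum_of_real_square by (simp only:)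
qed

lemma component_le_mlen: "\<alpha> j \<le> mlen \<alpha>"
  unfolding mlen_def by (rule member_le_sum) auto

lemma finite_mlen_le: "finite {\<alpha> :: 'n::finite \<Rightarrow> nat. mlen \<alpha> \<le> N}"
proof (rule finite_subset)
  show "{\<alpha>. mlen \<alpha> \<le> N} \<subseteq> PiE (UNIV :: 'n set) (\<lambda>_. {..N})"
  proof
    fix \<alpha> :: "'n \<Rightarrow> nat"
    assume "\<alpha> \<in> {\<alpha>. mlen \<alpha> \<le> N}"
    then have "\<alpha> j \<le> N" for j
      using component_le_mlen[of \<alpha> j] by simp
    then show "\<alpha> \<in> PiE UNIV (\<lambda>_. {..N})"
      by (simp add: PiE_def extensional_def)
  qed
qed (simp add: finite_PiE)

lemma hermite_space_iff: "f \<in> hermite_space N \<longleftrightarrow> (\<exists>c. f = hermite_comb {\<alpha>. mlen \<alpha> \<le> N} c id)"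
  unfolding hermite_space_def hermite_comb_def by (simp add: fun_eq_iff)

lemma hermite_comb_in_hermite_space:
  assumes "finite S" and "\<And>s. s \<in> S \<Longrightarrow> mlen (\<sigma> s) \<le> N"
  shows "hermite_comb S w \<sigma> \<in> hermite_space N"
proof -
  define c where "c \<gamma> = (\<Sum>s\<in>{s\<in>S. \<sigma> s = \<gamma>}. w s)" for \<gamma>
  have "hermite_comb S w \<sigma> = hermite_comb {\<alpha>. mlen \<alpha> \<le> N} c id"
  proof
    fix x
    show "hermite_comb S w \<sigma> x = hermite_comb {\<alpha>. mlen \<alpha> \<le> N} c id x"
      unfolding hermite_comb_def c_def sum_distrib_right
      using sum.group[OF \<open>finite S\<close> finite_mlen_le[of N], of \<sigma> "\<lambda>s. w s * of_real (hermite_multi (\<sigma> s) x)"] assms(2)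
      by (force intro!: sum.cong)
  qed
  then show ?thesis
    unfolding hermite_space_iff by blast
qed

lemma hermite_space_add:
  assumes "f \<in> hermite_space N" "g \<in> hermite_space N"
  shows "(\<lambda>x. f x + g x) \<in> hermite_space N"
proof -
  obtain c d where "f = hermite_comb {\<alpha>. mlen \<alpha> \<le> N} c id" "g = hermite_comb {\<alpha>. mlen \<alpha> \<le> N} d id"
    using assms unfolding hermite_space_iff by blast
  then have "(\<lambda>x. f x + g x) = hermite_comb {\<alpha>. mlen \<alpha> \<le> N} (\<lambda>\<alpha>. c \<alpha> + d \<alpha>) id"
    by (simp add: hermite_comb_def fun_eq_iff distrib_right sum.distrib)
  then show ?thesis
    unfolding hermite_space_iff by blast
qed

lemma has_bochner_integral_square_hermite_space:
  assumes "f = hermite_comb {\<alpha>. mlen \<alpha> \<le> N} c id"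
  shows "has_bochner_integral lborel (\<lambda>x. (cmod (f x))\<^sup>2) (\<Sum>\<alpha> | mlen \<alpha> \<le> N. (cmod (c \<alpha>))\<^sup>2)"
  unfolding assms by (rule has_bochner_integral_square_hermite_comb[OF finite_mlen_le]) simp

lemma integrable_square_hermite_space:
  assumes "f \<in> hermite_space N"
  shows "integrable lborel (\<lambda>x. (cmod (f x))\<^sup>2)"
proof -
  obtain c where "f = hermite_comb {\<alpha>. mlen \<alpha> \<le> N} c id"
    using assms unfolding hermite_space_iff by blast
  then show ?thesis
    by (rule integrable.intros[OF has_bochner_integral_square_hermite_space])
qed

section \<open>Partial derivatives on \<open>\<E>\<^sub>N\<close>\<close>

lemma hermite_multi_has_vector_derivative:
  "((\<lambda>t. complex_of_real (hermite_multi \<alpha> (x + t *\<^sub>R axis i 1))) has_vector_derivative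
     complex_of_real (sqrt (2 * real (\<alpha> i)) / 2 * hermite_multi (\<alpha>(i := \<alpha> i - 1)) x
       - sqrt (2 * (real (\<alpha> i) + 1)) / 2 * hermite_multi (\<alpha>(i := Suc (\<alpha> i))) x)) (at 0)"
proof -
  define R where "R = (\<Prod>j\<in>UNIV - {i}. hermite_fun (\<alpha> j) (x $ j))"
  have split: "hermite_multi (\<alpha>(i := m)) (x + t *\<^sub>R axis i 1) = hermite_fun m (t + x $ i) * R" for m t
    unfolding hermite_multi_def R_def prod.remove[OF finite UNIV_I, of _ i]
    by (auto simp: axis_def add.commute intro!: prod.cong)
  have "((\<lambda>t. hermite_fun (\<alpha> i) (t + x $ i) * R) has_real_derivative
          (sqrt (2 * real (\<alpha> i)) / 2 * hermite_fun (\<alpha> i - 1) (0 + x $ i)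
            - sqrt (2 * (real (\<alpha> i) + 1)) / 2 * hermite_fun (Suc (\<alpha> i)) (0 + x $ i)) * R) (at 0)"
    by (intro DERIV_cmult_right DERIV_shift[THEN iffD1] hermite_fun_has_derivative)
  moreover have "hermite_multi \<alpha> (x + t *\<^sub>R axis i 1) = hermite_fun (\<alpha> i) (t + x $ i) * R" for t
    using split[of "\<alpha> i" t] by simp
  moreover have "(sqrt (2 * real (\<alpha> i)) / 2 * hermite_fun (\<alpha> i - 1) (0 + x $ i)
                    - sqrt (2 * (real (\<alpha> i) + 1)) / 2 * hermite_fun (Suc (\<alpha> i)) (0 + x $ i)) * R
                 = sqrt (2 * real (\<alpha> i)) / 2 * hermite_multi (\<alpha>(i := \<alpha> i - 1)) x
                    - sqrt (2 * (real (\<alpha> i) + 1)) / 2 * hermite_multi (\<alpha>(i := Suc (\<alpha> i))) x"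
    using split[of _ 0] by (simp add: algebra_simps)
  ultimately show ?thesis
    by (simp only: has_vector_derivative_of_real)
qed

lemma mlen_fun_upd: "mlen (\<alpha>(i := m)) + \<alpha> i = mlen \<alpha> + m"
proof -
  have "(\<Sum>j\<in>UNIV - {i}. (\<alpha>(i := m)) j) = (\<Sum>j\<in>UNIV - {i}. \<alpha> j)"
    by (rule sum.cong) auto
  then show ?thesis
    unfolding mlen_def sum.remove[OF finite UNIV_I, of _ i] by simp
qed

lemma partial_hermite_comb:
  "partial i (hermite_comb S c id) = (\<lambda>x.
      hermite_comb S (\<lambda>\<alpha>. c \<alpha> * of_real (sqrt (2 * real (\<alpha> i)) / 2)) (\<lambda>\<alpha>. \<alpha>(i := \<alpha> i - 1)) x
    + hermite_comb S (\<lambda>\<alpha>. - c \<alpha> * of_real (sqrt (2 * (real (\<alpha> i) + 1)) / 2)) (\<lambda>\<alpha>. \<alpha>(i := Suc (\<alpha> i))) x)"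
    (is "_ = (\<lambda>x. ?D x)")
proof
  fix x
  have "((\<lambda>t. hermite_comb S c id (x + t *\<^sub>R axis i 1)) has_vector_derivative
          (\<Sum>\<alpha>\<in>S. c \<alpha> * of_real (sqrt (2 * real (\<alpha> i)) / 2 * hermite_multi (\<alpha>(i := \<alpha> i - 1)) x
            - sqrt (2 * (real (\<alpha> i) + 1)) / 2 * hermite_multi (\<alpha>(i := Suc (\<alpha> i))) x))) (at 0)"
    unfolding hermite_comb_def id_def
    by (intro has_vector_derivative_sum has_vector_derivative_mult_right hermite_multi_has_vector_derivative)
  also have "(\<Sum>\<alpha>\<in>S. c \<alpha> * of_real (sqrt (2 * real (\<alpha> i)) / 2 * hermite_multi (\<alpha>(i := \<alpha> i - 1)) x
              - sqrt (2 * (real (\<alpha> i) + 1)) / 2 * hermite_multi (\<alpha>(i := Suc (\<alpha> i))) x)) = ?D x"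
    unfolding hermite_comb_def by (simp add: sum.distrib[symmetric] algebra_simps)
  finally show "partial i (hermite_comb S c id) x = ?D x"
    unfolding partial_def by (rule vector_derivative_at)
qed

lemma partial_in_hermite_space:
  assumes "f \<in> hermite_space M"
  shows "partial i f \<in> hermite_space (Suc M)"
proof -
  obtain c where f: "f = hermite_comb {\<alpha>. mlen \<alpha> \<le> M} c id"
    using assms unfolding hermite_space_iff by blast
  show ?thesis
    unfolding f partial_hermite_comb
  proof (intro hermite_space_add hermite_comb_in_hermite_space finite_mlen_le)
    fix \<alpha> :: "'a \<Rightarrow> nat"
    assume "\<alpha> \<in> {\<alpha>. mlen \<alpha> \<le> M}"
    then show "mlen (\<alpha>(i := \<alpha> i - 1)) \<le> Suc M" "mlen (\<alpha>(i := Suc (\<alpha> i))) \<le> Suc M"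
      using mlen_fun_upd[of \<alpha> i "\<alpha> i - 1"] mlen_fun_upd[of \<alpha> i "Suc (\<alpha> i)"] by simp_all
  qed
qed

lemma power2_norm_add_le: "(norm (a + b))\<^sup>2 \<le> 2 * (norm a)\<^sup>2 + 2 * (norm b)\<^sup>2"
proof -
  have "(norm (a + b))\<^sup>2 \<le> (norm a + norm b)\<^sup>2"
    by (simp add: power_mono norm_triangle_ineq)
  also have "\<dots> \<le> 2 * (norm a)\<^sup>2 + 2 * (norm b)\<^sup>2"
    using power2_sum[of "norm a" "norm b"] power2_diff[of "norm a" "norm b"]
      zero_le_power2[of "norm a - norm b"] by linarith
  finally show ?thesis .
qed

lemma integral_square_partial_le:
  fixes c :: "('n::finite \<Rightarrow> nat) \<Rightarrow> complex"
  shows "(LINT x|lborel. (cmod (partial i (hermite_comb {\<alpha>. mlen \<alpha> \<le> M} c id) x))\<^sup>2)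
           \<le> (\<Sum>\<alpha> | mlen \<alpha> \<le> M. (cmod (c \<alpha>))\<^sup>2 * (2 * real (\<alpha> i) + 1))"
proof -
  let ?S = "{\<alpha>. mlen \<alpha> \<le> M}"
  define lower where "lower \<alpha> = c \<alpha> * of_real (sqrt (2 * real (\<alpha> i)) / 2)" for \<alpha>
  define raise where "raise \<alpha> = - c \<alpha> * of_real (sqrt (2 * (real (\<alpha> i) + 1)) / 2)" for \<alpha>
  let ?F = "hermite_comb ?S lower (\<lambda>\<alpha>. \<alpha>(i := \<alpha> i - 1))"
  let ?G = "hermite_comb ?S raise (\<lambda>\<alpha>. \<alpha>(i := Suc (\<alpha> i)))"
  have partial_eq: "partial i (hermite_comb ?S c id) = (\<lambda>x. ?F x + ?G x)"
    unfolding lower_def raise_def by (rule partial_hermite_comb)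
  have F: "has_bochner_integral lborel (\<lambda>x. (cmod (?F x))\<^sup>2) (\<Sum>\<alpha>\<in>?S. (cmod (lower \<alpha>))\<^sup>2)"
  proof (rule has_bochner_integral_square_hermite_comb[OF finite_mlen_le], rule inj_onI)
    fix \<alpha> \<beta> :: "'n \<Rightarrow> nat"
    assume "\<alpha> \<in> {\<alpha> \<in> ?S. lower \<alpha> \<noteq> 0}" "\<beta> \<in> {\<alpha> \<in> ?S. lower \<alpha> \<noteq> 0}"
      and eq: "\<alpha>(i := \<alpha> i - 1) = \<beta>(i := \<beta> i - 1)"
    then have "\<alpha> i \<noteq> 0" "\<beta> i \<noteq> 0"
      by (auto simp: lower_def)
    moreover have "\<alpha> i - 1 = \<beta> i - 1" "\<forall>j. j \<noteq> i \<longrightarrow> \<alpha> j = \<beta> j"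
      using eq by (metis fun_upd_same, metis fun_upd_other)
    ultimately show "\<alpha> = \<beta>"
      by (metis diff_0_eq_0 diff_Suc_1 not0_implies_Suc ext)
  qed
  have G: "has_bochner_integral lborel (\<lambda>x. (cmod (?G x))\<^sup>2) (\<Sum>\<alpha>\<in>?S. (cmod (raise \<alpha>))\<^sup>2)"
  proof (rule has_bochner_integral_square_hermite_comb[OF finite_mlen_le], rule inj_onI)
    fix \<alpha> \<beta> :: "'n \<Rightarrow> nat"
    assume "\<alpha>(i := Suc (\<alpha> i)) = \<beta>(i := Suc (\<beta> i))"
    then show "\<alpha> = \<beta>"
      by (metis fun_upd_same fun_upd_other Suc_inject ext)
  qed
  have "hermite_comb ?S c id \<in> hermite_space M"
    unfolding hermite_space_iff by blast
  from integrable_square_hermite_space[OF partial_in_hermite_space[OF this, of i]]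
  have "integrable lborel (\<lambda>x. (cmod (?F x + ?G x))\<^sup>2)"
    by (simp add: partial_eq)
  moreover have "integrable lborel (\<lambda>x. 2 * (cmod (?F x))\<^sup>2 + 2 * (cmod (?G x))\<^sup>2)"
    using F G by (intro Bochner_Integration.integrable_add Bochner_Integration.integrable_mult_right integrable.intros)
  ultimately have "(LINT x|lborel. (cmod (partial i (hermite_comb ?S c id) x))\<^sup>2)
                     \<le> (LINT x|lborel. 2 * (cmod (?F x))\<^sup>2 + 2 * (cmod (?G x))\<^sup>2)"
    unfolding partial_eq by (rule integral_mono) (rule power2_norm_add_le)
  also have "\<dots> = 2 * (\<Sum>\<alpha>\<in>?S. (cmod (lower \<alpha>))\<^sup>2) + 2 * (\<Sum>\<alpha>\<in>?S. (cmod (raise \<alpha>))\<^sup>2)"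
    using F G by (simp add: has_bochner_integral_iff)
  also have "\<dots> = (\<Sum>\<alpha>\<in>?S. (cmod (c \<alpha>))\<^sup>2 * (2 * real (\<alpha> i) + 1))"
    unfolding sum_distrib_left sum.distrib[symmetric]
    by (intro sum.cong refl) (simp add: lower_def raise_def norm_mult power_mult_distrib power_divide algebra_simps)
  finally show ?thesis .
qed

lemma L2_norm_partial_le:
  assumes "f \<in> hermite_space M"
  shows "L2_norm (partial i f) \<le> sqrt (2 * (real M + 1)) * L2_norm f"
proof -
  obtain c where f: "f = hermite_comb {\<alpha>. mlen \<alpha> \<le> M} c id"
    using assms unfolding hermite_space_iff by blast
  have "(LINT x|lborel. (cmod (partial i f x))\<^sup>2)
          \<le> (\<Sum>\<alpha> | mlen \<alpha> \<le> M. (cmod (c \<alpha>))\<^sup>2 * (2 * real (\<alpha> i) + 1))"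
    unfolding f by (rule integral_square_partial_le)
  also have "\<dots> \<le> (\<Sum>\<alpha> | mlen \<alpha> \<le> M. (cmod (c \<alpha>))\<^sup>2 * (2 * (real M + 1)))"
    using component_le_mlen[of _ i] order_trans by (intro sum_mono mult_left_mono) fastforce+
  also have "\<dots> = 2 * (real M + 1) * (LINT x|lborel. (cmod (f x))\<^sup>2)"
    using has_bochner_integral_square_hermite_space[OF f]
    by (simp add: has_bochner_integral_iff sum_distrib_left mult_ac)
  finally show ?thesis
    unfolding L2_norm_def real_sqrt_mult[symmetric] by (rule real_sqrt_le_mono)
qed

section \<open>The growth bound\<close>

lemma pow_div_fact_le_exp:
  fixes x :: real
  assumes "x \<ge> 0"
  shows "x ^ j / fact j \<le> exp x"
proof -
  have "(\<lambda>n. x ^ n / fact n) sums exp x"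
    using exp_converges[of x] by (simp add: divide_inverse mult.commute)
  then show ?thesis
    using sum_le_suminf[of "\<lambda>n. x ^ n / fact n" "{j}"] assms by (simp add: sums_iff)
qed

lemma prod_max_one_le_exp:
  fixes x :: real
  assumes "x \<ge> 0"
  shows "(\<Prod>k<m. max 1 (x / (real k + 1))) \<le> exp x"
proof -
  define j where "j = min m (nat \<lfloor>x\<rfloor>)"
  have "(\<Prod>k<m. max 1 (x / (real k + 1))) = (\<Prod>k<j. x / (real k + 1)) * (\<Prod>k\<in>{j..<m}. 1)"
  proof -
    have "j \<le> m"
      by (simp add: j_def)
    then have split: "{..<m} = {..<j} \<union> {j..<m}"
      by auto
    have "max 1 (x / (real k + 1)) = x / (real k + 1)" if "k < j" for k
    proof -
      have "int (Suc k) \<le> \<lfloor>x\<rfloor>"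
        using that by (simp add: j_def) linarith
      then have "real k + 1 \<le> x"
        by linarith
      then show ?thesis
        by (simp add: le_divide_eq)
    qed
    moreover have "max 1 (x / (real k + 1)) = 1" if "j \<le> k" "k < m" for k
    proof -
      have "\<lfloor>x\<rfloor> \<le> int k"
        using that by (simp add: j_def)
      then have "x \<le> real k + 1"
        by linarith
      then show ?thesis
        by (simp add: divide_le_eq)
    qed
    ultimately show ?thesis
      unfolding split by (subst prod.union_disjoint) auto
  qed
  also have "(\<Prod>k<j. x / (real k + 1)) = x ^ j / fact j"
  proof (induction j)
    case (Suc j)
    then show ?case
      by (simp add: power_Suc mult_ac)
  qed simp
  finally show ?thesis
    using pow_div_fact_le_exp[OF assms, of j] by simp
qed

lemma sqrt_factor_le:
  fixes \<delta> a :: real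
  assumes "\<delta> > 0" and "a \<ge> 1"
  shows "sqrt (2 * (real N + a)) \<le> 2 * \<delta> * a * max 1 (sqrt (real N) / \<delta> / a) * sqrt (max 1 (1 / \<delta>\<^sup>2 / a))"
proof -
  let ?t = "sqrt (real N) / \<delta> / a" and ?u = "1 / \<delta>\<^sup>2 / a"
  have c: "0 \<le> 2 * \<delta> * a"
    using assms by simp
  show ?thesis
  proof (cases "real N \<ge> a")
    case True
    have "sqrt (2 * (real N + a)) \<le> sqrt (4 * real N)"
      using True by simp
    also have "\<dots> = 2 * \<delta> * a * ?t"
      using assms by (simp add: real_sqrt_mult field_simps)
    also have "\<dots> \<le> 2 * \<delta> * a * max 1 ?t * 1"
      using c by (simp only: mult_1_right) (rule mult_left_mono, simp_all)
    also have "\<dots> \<le> 2 * \<delta> * a * max 1 ?t * sqrt (max 1 ?u)"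
      using c by (intro mult_left_mono) simp_all
    finally show ?thesis .
  next
    case False
    have "sqrt (2 * (real N + a)) \<le> sqrt (4 * a)"
      using False by simp
    also have "\<dots> = 2 * \<delta> * a * sqrt ?u"
      using assms by (simp add: real_sqrt_mult real_sqrt_divide field_simps real_div_sqrt)
    also have "\<dots> \<le> 2 * \<delta> * a * 1 * sqrt (max 1 ?u)"
      using c by (simp add: mult_left_mono)
    also have "\<dots> \<le> 2 * \<delta> * a * max 1 ?t * sqrt (max 1 ?u)"
      using c by (intro mult_right_mono mult_left_mono) simp_all
    finally show ?thesis .
  qed
qed

lemma real_sqrt_prod: "sqrt (\<Prod>i\<in>A. f i) = (\<Prod>i\<in>A. sqrt (f i))"
  by (induction A rule: infinite_finite_induct) (simp_all add: real_sqrt_mult)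

definition derivative_gain :: "nat \<Rightarrow> nat \<Rightarrow> real" where
  "derivative_gain N m = (\<Prod>k<m. sqrt (2 * (real N + real k + 1)))"

lemma derivative_gain_le:
  assumes "\<delta> > 0"
  shows "derivative_gain N m \<le> exp (1 / (2 * \<delta>\<^sup>2)) * (2 * \<delta>) ^ m * fact m * exp (sqrt (real N) / \<delta>)"
proof -
  let ?x = "sqrt (real N) / \<delta>" and ?y = "1 / \<delta>\<^sup>2"
  have "derivative_gain N m
          \<le> (\<Prod>k<m. 2 * \<delta> * (real k + 1) * max 1 (?x / (real k + 1)) * sqrt (max 1 (?y / (real k + 1))))"
    unfolding derivative_gain_def
    using sqrt_factor_le[OF assms, of "real _ + 1" N] by (intro prod_mono) (simp add: add.assoc)
  also have "\<dots> = (\<Prod>k<m. 2 * \<delta> * (real k + 1)) * (\<Prod>k<m. max 1 (?x / (real k + 1)))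
                      * sqrt (\<Prod>k<m. max 1 (?y / (real k + 1)))"
    by (simp add: prod.distrib real_sqrt_prod)
  also have "(\<Prod>k<m. 2 * \<delta> * (real k + 1)) = (2 * \<delta>) ^ m * fact m"
    by (induction m) (simp_all add: algebra_simps)
  also have "(2 * \<delta>) ^ m * fact m * (\<Prod>k<m. max 1 (?x / (real k + 1))) * sqrt (\<Prod>k<m. max 1 (?y / (real k + 1)))
               \<le> (2 * \<delta>) ^ m * fact m * exp ?x * sqrt (exp ?y)"
    using assms by (intro mult_mono prod_max_one_le_exp real_sqrt_le_mono) (auto simp: prod_nonneg)
  also have "sqrt (exp ?y) = exp (1 / (2 * \<delta>\<^sup>2))"
    by (rule real_sqrt_unique) (simp_all add: power2_eq_square exp_add[symmetric])
  finally show ?thesis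
    by (simp only: mult_ac)
qed

section \<open>Iterated partial derivatives\<close>

lemma foldr_partial_in_hermite_space:
  "f \<in> hermite_space N \<Longrightarrow> foldr partial is f \<in> hermite_space (N + length is)"
  by (induction "is") (simp_all add: partial_in_hermite_space)

lemma L2_norm_foldr_partial_le:
  assumes "f \<in> hermite_space N"
  shows "L2_norm (foldr partial is f) \<le> derivative_gain N (length is) * L2_norm f"
proof (induction "is")
  case Nil
  then show ?case
    by (simp add: derivative_gain_def)
next
  case (Cons i "is")
  have "L2_norm (foldr partial (i # is) f) \<le> sqrt (2 * (real (N + length is) + 1)) * L2_norm (foldr partial is f)"
    using L2_norm_partial_le[OF foldr_partial_in_hermite_space[OF assms]] by simp
  also have "\<dots> \<le> sqrt (2 * (real (N + length is) + 1)) * (derivative_gain N (length is) * L2_norm f)"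
    using Cons.IH by (rule mult_left_mono) simp
  also have "\<dots> = derivative_gain N (length (i # is)) * L2_norm f"
    by (simp add: derivative_gain_def algebra_simps)
  finally show ?case .
qed

lemma multi_partial_eq_foldr:
  "multi_partial \<beta> f = foldr partial (concat (map (\<lambda>i. replicate (\<beta> i) i) coord_list)) f"
proof -
  have "foldr (\<lambda>i. partial i ^^ \<beta> i) xs f = foldr partial (concat (map (\<lambda>i. replicate (\<beta> i) i) xs)) f"
    for xs :: "'a list"
    by (induction xs) simp_all
  then show ?thesis
    unfolding multi_partial_def by simp
qed

lemma length_concat_replicate_coord_list:
  "length (concat (map (\<lambda>i. replicate (\<beta> i) i) (coord_list :: 'n::finite list))) = mlen \<beta>"
proof -
  have "\<exists>xs :: 'n list. distinct xs \<and> set xs = UNIV"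
    using finite_distinct_list[of "UNIV :: 'n set"] by auto
  then have "distinct (coord_list :: 'n list) \<and> set (coord_list :: 'n list) = UNIV"
    unfolding coord_list_def by (rule someI_ex)
  then show ?thesis
    by (simp add: length_concat comp_def mlen_def sum_list_distinct_conv_sum_set)
qed

theorem mainTheorem10:
  fixes N :: nat and f :: "real ^ 'n::finite \<Rightarrow> complex" and \<delta> :: real and \<beta> :: "'n \<Rightarrow> nat"
  assumes "f \<in> hermite_space N" and "0 < \<delta>" and "\<delta> \<le> 1"
  shows "L2_norm (multi_partial \<beta> f)
    \<le> exp (exp 1 / (2 * \<delta>\<^sup>2)) * (2 * \<delta>) ^ mlen \<beta> * fact (mlen \<beta>) * exp (sqrt (real N) / \<delta>)
       * L2_norm f"
proof -
  have "L2_norm (multi_partial \<beta> f) \<le> derivative_gain N (mlen \<beta>) * L2_norm f"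
    using L2_norm_foldr_partial_le[OF assms(1), of "concat (map (\<lambda>i. replicate (\<beta> i) i) coord_list)"]
    unfolding multi_partial_eq_foldr length_concat_replicate_coord_list .
  also have "\<dots> \<le> exp (1 / (2 * \<delta>\<^sup>2)) * (2 * \<delta>) ^ mlen \<beta> * fact (mlen \<beta>) * exp (sqrt (real N) / \<delta>) * L2_norm f"
    using derivative_gain_le[OF assms(2)] by (rule mult_right_mono) (simp add: L2_norm_def)
  also have "\<dots> \<le> exp (exp 1 / (2 * \<delta>\<^sup>2)) * (2 * \<delta>) ^ mlen \<beta> * fact (mlen \<beta>) * exp (sqrt (real N) / \<delta>) * L2_norm f"
    using assms(2) by (intro mult_right_mono) (auto simp: L2_norm_def intro!: divide_right_mono)
  finally show ?thesis .
qed

end
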